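(* Let $n$ be a positive integer, let $p\ge q$ be positive integers, and let $B$ be a $p\times q$ matrix. For each positive divisor $k$ of $n$, let $F_k$ be the symmetric block matrix of size $kq+\frac{n}{k}p$ whose block rows and columns have sizes, in order, $p$, then $q$ repeated $k$ times, then $p$ repeated $\frac{n}{k}-1$ times; the block in a size-$p$ block row and a size-$q$ block column is $B$, the block in a size-$q$ block row and a size-$p$ block column is $B^T$, and all other blocks are zero. That is, $$F_k=\begin{bmatrix} 0 & B & \cdots & B & 0 & \cdots & 0\\ B^T & 0 & \cdots & 0 & B^T & \cdots & B^T\\ \vdots & \vdots & \ddots & \vdots & \vdots & \ddots & \vdots\\ B^T & 0 & \cdots & 0 & B^T & \cdots & B^T\\ 0 & B & \cdots & B & 0 & \cdots & 0\\ \vdots & \vdots & \ddots & \vdots & \vdots & \ddots & \vdots\\ 0 & B & \cdots & B & 0 & \cdots & 0\end{bmatrix}.$$ Then the matrices $F_k\oplus 0_{(n-\frac{n}{k})p+(1-k)q}$, as $k$ ranges over all positive divisors of $n$, are pairwise cospectral.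
   Context: For matrices $X,Y$, $X\oplus Y=\begin{bmatrix} X&0\\0&Y\end{bmatrix}$; $0_m$ is the $m\times m$ zero matrix. Two square matrices are cospectral if they have the same eigenvalues with the same multiplicities. *)

theory Defs
  imports "Jordan_Normal_Form.Jordan_Normal_Form"
begin

definition dsum :: "'a::zero mat \<Rightarrow> 'a mat \<Rightarrow> 'a mat" where
  "dsum X Y = four_block_mat X (0\<^sub>m (dim_row X) (dim_col Y)) (0\<^sub>m (dim_row Y) (dim_col X)) Y"

text \<open>Cospectral: square matrices of the same size whose eigenvalues agree with
  (algebraic) multiplicities, i.e. every scalar has the same multiplicity as a root
  of the characteristic polynomial.\<close>
definition cospectral :: "'a::idom mat \<Rightarrow> 'a mat \<Rightarrow> bool" where
  "cospectral X Y \<longleftrightarrow> square_mat X \<and> square_mat Y \<and> dim_row X = dim_row Y \<and>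
     (\<forall>c. order c (char_poly X) = order c (char_poly Y))"

text \<open>Index i lies in a "p-block" iff i < p or i >= p + k*q; its offset inside its block
  is given by offP, resp. offQ for "q-blocks".\<close>
definition Fk :: "nat \<Rightarrow> nat \<Rightarrow> 'a::zero mat \<Rightarrow> 'a mat" where
  "Fk n k B = (let p = dim_row B; q = dim_col B; N = k * q + (n div k) * p;
     isP = (\<lambda>i. i < p \<or> p + k * q \<le> i);
     offP = (\<lambda>i. if i < p then i else (i - p - k * q) mod p);
     offQ = (\<lambda>i. (i - p) mod q)
   in mat N N (\<lambda>(i, j).
        if isP i \<and> \<not> isP j then B $$ (offP i, offQ j)
        else if \<not> isP i \<and> isP j then B $$ (offP j, offQ i)
        else 0))"

text \<open>Size of the zero padding: (n - n/k) p + (1 - k) q, which is a nonnegative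
  integer whenever p \<ge> q and k divides n (written with nat arithmetic).\<close>
definition pad_size :: "nat \<Rightarrow> nat \<Rightarrow> nat \<Rightarrow> nat \<Rightarrow> nat" where
  "pad_size n k p q = (n - n div k) * p + q - k * q"

end

theory Submission
  imports Defs
begin

text \<open>Every row and column of F_k \<oplus> 0 is either zero or a copy of a row or column of
  X = [[0, B], [B^T, 0]]: the first p rows of X are copied n/k times, the last q rows k times.
  So F_k \<oplus> 0 = S X S^T for a 0/1 matrix S with np + q rows and p + q columns, and
  S^T S = diag(n/k, ..., n/k, k, ..., k). Sylvester's identity
  x^(p+q) \<chi>(S X S^T) = x^(np+q) \<chi>(X S^T S) reduces the characteristic polynomial of
  F_k \<oplus> 0 to that of [[0, kB], [(n/k) B^T, 0]], and a diagonal similarity turns this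
  matrix into [[0, nB], [B^T, 0]], which no longer depends on k.\<close>

lemma char_poly_matrix_mult:
  fixes U :: "'a::comm_ring_1 mat"
  assumes U: "U \<in> carrier_mat a b" and V: "V \<in> carrier_mat b a"
  shows "char_poly_matrix (U * V) =
    [:0,1:] \<cdot>\<^sub>m 1\<^sub>m a - map_mat (\<lambda>x. [:x:]) U * map_mat (\<lambda>x. [:x:]) V"
proof -
  interpret const: comm_ring_hom "\<lambda>x::'a. [:x:]"
    by unfold_locales (auto simp: one_pCons)
  show ?thesis
    unfolding char_poly_matrix_def const.mat_hom_mult[OF U V, symmetric]
    using U V by (intro eq_matI) auto
qed

text \<open>Sylvester's identity, from two block eliminations of M = [[x I, U], [V, I]]:
  on the right by [[I, 0], [-V, I]] and on the left by [[I, 0], [-V, x I]].\<close>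
lemma char_poly_mult_commute:
  fixes U :: "'a::idom mat"
  assumes U: "U \<in> carrier_mat a b" and V: "V \<in> carrier_mat b a"
  shows "[:0,1:] ^ b * char_poly (U * V) = [:0,1:] ^ a * char_poly (V * U)"
proof -
  define x :: "'a poly" where "x = [:0,1:]"
  define U' where "U' = map_mat (\<lambda>c. [:c:]) U"
  define V' where "V' = map_mat (\<lambda>c. [:c:]) V"
  have U': "U' \<in> carrier_mat a b" and V': "V' \<in> carrier_mat b a"
    using U V by (auto simp: U'_def V'_def)
  define M where "M = four_block_mat (x \<cdot>\<^sub>m 1\<^sub>m a) U' V' (1\<^sub>m b)"
  have M: "M \<in> carrier_mat (a + b) (a + b)" using U' V' by (simp add: M_def)
  have "M * four_block_mat (1\<^sub>m a) (0\<^sub>m a b) (- V') (1\<^sub>m b) =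
      four_block_mat (char_poly_matrix (U * V)) U' (0\<^sub>m b a) (1\<^sub>m b)"
    unfolding M_def char_poly_matrix_mult[OF U V] x_def U'_def[symmetric] V'_def[symmetric]
    using U' V' by (subst mult_four_block_mat[of _ a a _ b _ b]) auto
  then have "det M = char_poly (U * V)"
    using det_mult[OF M, of "four_block_mat (1\<^sub>m a) (0\<^sub>m a b) (- V') (1\<^sub>m b)"] U' V' U V
    by (simp add: char_poly_def det_four_block_mat_upper_right_zero[of _ a _ b]
        det_four_block_mat_lower_left_zero[of _ a _ b])
  moreover have "four_block_mat (1\<^sub>m a) (0\<^sub>m a b) (- V') (x \<cdot>\<^sub>m 1\<^sub>m b) * M =
      four_block_mat (x \<cdot>\<^sub>m 1\<^sub>m a) U' (0\<^sub>m b a) (char_poly_matrix (V * U))"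
    unfolding M_def char_poly_matrix_mult[OF V U] x_def U'_def[symmetric] V'_def[symmetric]
    using U' V' by (subst mult_four_block_mat[of _ a a _ b _ b]) auto
  then have "x ^ b * det M = x ^ a * char_poly (V * U)"
    using det_mult[OF _ M, of "four_block_mat (1\<^sub>m a) (0\<^sub>m a b) (- V') (x \<cdot>\<^sub>m 1\<^sub>m b)"] U' V' U V
    by (simp add: char_poly_def det_four_block_mat_upper_right_zero[of _ a _ b]
        det_four_block_mat_lower_left_zero[of _ a _ b])
  ultimately show ?thesis by (simp add: x_def)
qed

definition inflate_mat :: "nat \<Rightarrow> (nat \<Rightarrow> nat) \<Rightarrow> 'a::zero mat \<Rightarrow> 'a mat" where
  "inflate_mat N cls C = mat N N (\<lambda>(i, j).
     if cls i < dim_row C \<and> cls j < dim_row C then C $$ (cls i, cls j) else 0)"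

lemma char_poly_inflate_mat:
  fixes C :: "'a::idom mat"
  assumes C: "C \<in> carrier_mat r r"
  shows "[:0,1:] ^ r * char_poly (inflate_mat N cls C) =
    [:0,1:] ^ N * char_poly (C * mat_diag r (\<lambda>a. of_nat (card {i. i < N \<and> cls i = a})))"
proof -
  define S :: "'a mat" where "S = mat N r (\<lambda>(i, a). of_bool (cls i = a))"
  define T where "T = C * transpose_mat S"
  have S: "S \<in> carrier_mat N r" by (simp add: S_def)
  have T: "T \<in> carrier_mat r N" using C S by (simp add: T_def)
  have T_index: "T $$ (a, j) = (if cls j < r then C $$ (a, cls j) else 0)" if "a < r" "j < N" for a j
    using that C by (simp add: T_def S_def scalar_prod_def if_distrib[of "\<lambda>x. _ * x"] cong: if_cong)
  have ST: "S * T = inflate_mat N cls C"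
    using S T C unfolding inflate_mat_def
    by (intro eq_matI)
      (auto simp: S_def scalar_prod_def T_index if_distrib[of "\<lambda>x. x * _"] cong: if_cong)
  have delta: "of_bool (cls i = a) * of_bool (cls i = b) =
      (of_bool (a = b) * of_bool (cls i = a) :: 'a)"
    for i a b by auto
  have "transpose_mat S * S = mat_diag r (\<lambda>a. of_nat (card {i. i < N \<and> cls i = a}))"
    using S by (intro eq_matI) (auto simp: S_def mat_diag_def scalar_prod_def delta
        sum_distrib_left[symmetric] Int_def)
  then have TS: "T * S = C * mat_diag r (\<lambda>a. of_nat (card {i. i < N \<and> cls i = a}))"
    using C S by (simp add: T_def assoc_mult_mat[of _ r r _ N _ r])
  show ?thesis using char_poly_mult_commute[OF S T] unfolding ST TS .
qed

definition bipartite_mat :: "'a::semiring_1 mat \<Rightarrow> 'a \<Rightarrow> 'a \<Rightarrow> 'a mat" where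
  "bipartite_mat B a b = four_block_mat (0\<^sub>m (dim_row B) (dim_row B)) (a \<cdot>\<^sub>m B)
     (b \<cdot>\<^sub>m transpose_mat B) (0\<^sub>m (dim_col B) (dim_col B))"

lemma bipartite_mat_carrier:
  "B \<in> carrier_mat p q \<Longrightarrow> bipartite_mat B a b \<in> carrier_mat (p + q) (p + q)"
  by (simp add: bipartite_mat_def)

lemma bipartite_mat_index:
  assumes "B \<in> carrier_mat p q" and "i < p + q" and "j < p + q"
  shows "bipartite_mat B a b $$ (i, j) =
    (if i < p \<and> p \<le> j then a * B $$ (i, j - p)
     else if p \<le> i \<and> j < p then b * B $$ (j, i - p) else 0)"
  using assms by (auto simp: bipartite_mat_def)

lemma similar_bipartite_mat_scale:
  fixes B :: "'a::field mat"
  assumes B: "B \<in> carrier_mat p q" and b: "b \<noteq> 0"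
  shows "similar_mat (bipartite_mat B a b) (bipartite_mat B (a * b) 1)"
proof (rule similar_matI)
  let ?P = "mat_diag (p + q) (\<lambda>i. if i < p then inverse b else 1)"
  let ?Q = "mat_diag (p + q) (\<lambda>i. if i < p then b else 1)"
  show "{bipartite_mat B a b, bipartite_mat B (a * b) 1, ?P, ?Q} \<subseteq> carrier_mat (p + q) (p + q)"
    using B by (simp add: bipartite_mat_carrier)
  have "?P * ?Q = mat_diag (p + q) (\<lambda>_. 1)" "?Q * ?P = mat_diag (p + q) (\<lambda>_. 1)"
    unfolding mat_diag_diag using b by (intro arg_cong[where f = "mat_diag (p + q)"], force)+
  then show "?P * ?Q = 1\<^sub>m (p + q)" "?Q * ?P = 1\<^sub>m (p + q)" by simp_all
  have X: "bipartite_mat B (a * b) 1 \<in> carrier_mat (p + q) (p + q)"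
    using B by (rule bipartite_mat_carrier)
  show "bipartite_mat B a b = ?P * bipartite_mat B (a * b) 1 * ?Q"
    unfolding mat_diag_mult_left[OF X] using B b
    by (subst mat_diag_mult_right[of _ "p + q"])
      (auto intro!: eq_matI simp: bipartite_mat_index carrier_matD[OF bipartite_mat_carrier[OF B]])
qed

lemma bipartite_mat_mult_diag:
  fixes B :: "'a::comm_semiring_1 mat"
  assumes B: "B \<in> carrier_mat p q"
  shows "bipartite_mat B a b * mat_diag (p + q) (\<lambda>i. if i < p then c else d) =
    bipartite_mat B (a * d) (b * c)"
  using B by (subst mat_diag_mult_right[of _ "p + q"])
    (auto intro!: eq_matI simp: bipartite_mat_index bipartite_mat_carrier
      carrier_matD[OF bipartite_mat_carrier[OF B]] ac_simps)

lemma card_residue_class: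
  assumes "r < d"
  shows "card {i. a \<le> i \<and> i < a + t * d \<and> (i - a) mod d = r} = t"
proof -
  have "{i. a \<le> i \<and> i < a + t * d \<and> (i - a) mod d = r} = (\<lambda>j. a + j * d + r) ` {..<t}"
  proof (intro equalityI subsetI)
    fix i assume "i \<in> {i. a \<le> i \<and> i < a + t * d \<and> (i - a) mod d = r}"
    then have "i = a + (i - a) div d * d + r" and "(i - a) div d < t"
      using assms by (auto simp: div_less_iff_less_mult)
    then show "i \<in> (\<lambda>j. a + j * d + r) ` {..<t}" by blast
  next
    fix i assume "i \<in> (\<lambda>j. a + j * d + r) ` {..<t}"
    then obtain j where j: "j < t" "i = a + j * d + r" by blast
    have "j * d + r < Suc j * d" using assms by simp
    also have "\<dots> \<le> t * d" using j(1) by (intro mult_le_mono1) simp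
    finally have "j * d + r < t * d" .
    then show "i \<in> {i. a \<le> i \<and> i < a + t * d \<and> (i - a) mod d = r}"
      using assms j(2) by auto
  qed
  moreover have "inj_on (\<lambda>j. a + j * d + r) {..<t}"
    using assms by (auto simp: inj_on_def)
  ultimately show ?thesis by (simp add: card_image)
qed

text \<open>Row i of F_k \<oplus> 0 (with m = n/k) copies row Fk_class p q k m i of bipartite_mat B 1 1:
  the p-blocks copy rows 0..<p, the q-blocks copy rows p..<p+q, and the padding gets the
  out-of-range class p + q.\<close>
definition Fk_class :: "nat \<Rightarrow> nat \<Rightarrow> nat \<Rightarrow> nat \<Rightarrow> nat \<Rightarrow> nat" where
  "Fk_class p q k m i =
     (if i < p then i
      else if i < p + k * q then p + (i - p) mod q
      else if i < k * q + m * p then (i - p - k * q) mod p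
      else p + q)"

lemma Fk_class_less_imp_index_less:
  assumes "0 < m" and "Fk_class p q k m i < p + q"
  shows "i < k * q + m * p"
proof -
  have "j < k * q + m * p" if "j < p + k * q" for j
    using that assms(1) by (simp add: less_le_trans[of j "p + k * q"])
  then show ?thesis using assms(2) by (auto simp: Fk_class_def split: if_splits)
qed

lemma card_Fk_class:
  assumes q: "0 < q" "q \<le> p" and m: "0 < m" and a: "a < p + q"
  shows "card {i. Fk_class p q k m i = a} = (if a < p then m else k)"
proof (cases "a < p")
  case True
  have size: "k * q + m * p = p + k * q + (m - 1) * p"
    using m by (cases m) auto
  have "{i. Fk_class p q k m i = a} =
      insert a {i. p + k * q \<le> i \<and> i < p + k * q + (m - 1) * p \<and> (i - (p + k * q)) mod p = a}"
    using True unfolding Fk_class_def size by (auto simp: diff_diff_add)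
  moreover have "card {i. p + k * q \<le> i \<and> i < p + k * q + (m - 1) * p \<and>
      (i - (p + k * q)) mod p = a} = m - 1"
    using True by (rule card_residue_class)
  ultimately show ?thesis using True m by simp
next
  case False
  have mod_p: "x mod p \<noteq> p + y" for x y
    using q mod_less_divisor[of p x] by linarith
  have "{i. Fk_class p q k m i = a} = {i. p \<le> i \<and> i < p + k * q \<and> (i - p) mod q = a - p}"
    using False a q unfolding Fk_class_def by (auto simp: mod_p)
  moreover have "card {i. p \<le> i \<and> i < p + k * q \<and> (i - p) mod q = a - p} = k"
    using False a by (intro card_residue_class) simp
  ultimately show ?thesis using False by simp
qed

lemma Fk_size_add_pad_size:
  assumes "q \<le> p" and "0 < k" and "0 < m"
  shows "k * q + m * p + pad_size (k * m) k p q = k * m * p + q"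
proof -
  obtain k1 where k: "k = Suc k1" using assms(2) gr0_implies_Suc by blast
  have le: "k1 * q \<le> k1 * (m * p)"
    using assms(1,3) by (intro mult_le_mono2) (simp add: le_trans[of q p "m * p"])
  have "pad_size (k * m) k p q = (k * m - m) * p + q - k * q"
    using assms(2) by (simp add: pad_size_def)
  also have "\<dots> = k1 * (m * p) + q - (q + k1 * q)"
    by (simp add: k algebra_simps)
  finally show ?thesis
    by (simp add: k algebra_simps) (use le in linarith)
qed

lemma dsum_Fk_eq_inflate_mat:
  assumes B: "B \<in> carrier_mat p q" and q: "0 < q" "q \<le> p" and k: "0 < k" and m: "0 < m"
  shows "dsum (Fk (k * m) k B) (0\<^sub>m (pad_size (k * m) k p q) (pad_size (k * m) k p q)) =
    inflate_mat (k * m * p + q) (Fk_class p q k m) (bipartite_mat B 1 1)"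
proof -
  have size: "k * q + m * p + pad_size (k * m) k p q = k * m * p + q"
    using q(2) k m by (rule Fk_size_add_pad_size)
  have Fk: "Fk (k * m) k B = mat (k * q + m * p) (k * q + m * p) (\<lambda>(i, j).
      if (i < p \<or> p + k * q \<le> i) \<and> \<not> (j < p \<or> p + k * q \<le> j)
        then B $$ (if i < p then i else (i - p - k * q) mod p, (j - p) mod q)
      else if \<not> (i < p \<or> p + k * q \<le> i) \<and> (j < p \<or> p + k * q \<le> j)
        then B $$ (if j < p then j else (j - p - k * q) mod p, (i - p) mod q)
      else 0)"
    using B k unfolding Fk_def by (simp add: Let_def)
  have mod_p: "\<not> p \<le> x mod p" "x mod p < p + y" for x y
    using q mod_less_divisor[of p x] by linarith+
  have Fk_size: "i < k * q + m * p" if "i < p + k * q" for i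
    using that m by (simp add: less_le_trans[of i "p + k * q"])
  show ?thesis
    unfolding dsum_def Fk inflate_mat_def carrier_matD[OF bipartite_mat_carrier[OF B]]
    using B q size
    by (intro eq_matI) (auto simp: Fk_class_def bipartite_mat_index mod_p Fk_size)
qed

lemma dsum_Fk_carrier:
  fixes B :: "'a::semiring_1 mat"
  assumes "B \<in> carrier_mat p q" and "0 < q" "q \<le> p" and "0 < k" "k dvd n" and "0 < n"
  shows "dsum (Fk n k B) (0\<^sub>m (pad_size n k p q) (pad_size n k p q)) \<in> carrier_mat (n * p + q) (n * p + q)"
proof -
  obtain m where n: "n = k * m" using assms(5) by blast
  then show ?thesis
    using dsum_Fk_eq_inflate_mat[OF assms(1-4), of m] assms(6) by (simp add: inflate_mat_def)
qed

lemma char_poly_dsum_Fk: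
  fixes B :: "'a::field_char_0 mat"
  assumes B: "B \<in> carrier_mat p q" and q: "0 < q" "q \<le> p" and k: "0 < k" "k dvd n" and n: "0 < n"
  shows "[:0,1:] ^ (p + q) * char_poly (dsum (Fk n k B) (0\<^sub>m (pad_size n k p q) (pad_size n k p q))) =
    [:0,1:] ^ (n * p + q) * char_poly (bipartite_mat B (of_nat n) 1)"
proof -
  obtain m where nm: "n = k * m" using k(2) by blast
  have m: "0 < m" using n nm by simp
  let ?c = "Fk_class p q k m"
  let ?sizes = "\<lambda>a. of_nat (card {i. i < n * p + q \<and> ?c i = a}) :: 'a"
  have "k * m * p + q = k * q + m * p + pad_size (k * m) k p q"
    using q(2) k(1) m by (rule Fk_size_add_pad_size[symmetric])
  then have "{i. i < n * p + q \<and> ?c i = a} = {i. ?c i = a}" if "a < p + q" for a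
    using that nm by (auto dest: Fk_class_less_imp_index_less[OF m])
  then have sizes: "mat_diag (p + q) ?sizes = mat_diag (p + q) (\<lambda>a. if a < p then of_nat m else of_nat k)"
    using q m by (auto intro!: eq_matI simp: mat_diag_def card_Fk_class)
  have "[:0,1:] ^ (p + q) * char_poly (dsum (Fk n k B) (0\<^sub>m (pad_size n k p q) (pad_size n k p q))) =
      [:0,1:] ^ (n * p + q) * char_poly (bipartite_mat B 1 1 * mat_diag (p + q) ?sizes)"
    unfolding dsum_Fk_eq_inflate_mat[OF B q k(1) m, folded nm]
    by (rule char_poly_inflate_mat[OF bipartite_mat_carrier[OF B]])
  also have "bipartite_mat B 1 1 * mat_diag (p + q) ?sizes = bipartite_mat B (of_nat k) (of_nat m)"
    unfolding sizes bipartite_mat_mult_diag[OF B] by simp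
  also have "char_poly \<dots> = char_poly (bipartite_mat B (of_nat n) 1)"
    using similar_bipartite_mat_scale[OF B, of "of_nat m" "of_nat k"] m nm
    by (simp add: char_poly_similar)
  finally show ?thesis .
qed

theorem theorem3p5:
  fixes n p q k k' :: nat and B :: "complex mat"
  assumes "n > 0" and "q > 0" and "p \<ge> q"
    and "B \<in> carrier_mat p q"
    and "k > 0" and "k dvd n" and "k' > 0" and "k' dvd n"
  shows "cospectral (dsum (Fk n k B) (0\<^sub>m (pad_size n k p q) (pad_size n k p q)))
                    (dsum (Fk n k' B) (0\<^sub>m (pad_size n k' p q) (pad_size n k' p q)))"
proof -
  have "[:0,1:] ^ (p + q) * char_poly (dsum (Fk n k B) (0\<^sub>m (pad_size n k p q) (pad_size n k p q))) =
      [:0,1:] ^ (p + q) * char_poly (dsum (Fk n k' B) (0\<^sub>m (pad_size n k' p q) (pad_size n k' p q)))"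
    using char_poly_dsum_Fk[OF assms(4,2,3,5,6,1)] char_poly_dsum_Fk[OF assms(4,2,3,7,8,1)]
    by simp
  then have "char_poly (dsum (Fk n k B) (0\<^sub>m (pad_size n k p q) (pad_size n k p q))) =
      char_poly (dsum (Fk n k' B) (0\<^sub>m (pad_size n k' p q) (pad_size n k' p q)))"
    by simp
  then show ?thesis
    using dsum_Fk_carrier[OF assms(4,2,3,5,6,1)] dsum_Fk_carrier[OF assms(4,2,3,7,8,1)]
    by (simp add: cospectral_def square_mat.simps)
qed

end
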